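(* Let $s\in\mathbb R$, $0\le b<\tfrac12$, and let $\varphi\in\bigcap_{\beta<1/2}H^\beta(\mathbb R)$ be a function of $t$ only. Then there is a constant $C=C(\varphi,b)$ such that for every $u\in X_{s,\frac12}$, $$\|\varphi u\|_{X_{s,b}}\le C\,\|u\|_{X_{s,\frac12}}.$$
   Context: $\mathbb T=\mathbb R/2\pi\mathbb Z$. For $u(x,t)$ on $\mathbb T\times\mathbb R$, $\hat u(\xi,\tau)$ ($\xi\in\mathbb Z$, $\tau\in\mathbb R$) is the space-time Fourier transform, with the convention that solutions of $\partial_tu+\partial_x^3u=0$ have $\hat u$ supported on $\tau=\xi^3$. $\langle a\rangle=(1+|a|^2)^{1/2}$. For $s,b\in\mathbb R$, $X_{s,b}$ is the completion of Schwartz functions under $\|u\|_{X_{s,b}}=\big(\sum_{\xi\in\mathbb Z}\frac1{2\pi}\int_{\mathbb R}\langle\xi\rangle^{2s}\langle\tau-\xi^3\rangle^{2b}|\hat u(\xi,\tau)|^2d\tau\big)^{1/2}$. (An example of admissible $\varphi$ is $\chi_{[0,\delta]}(t)e^{-\delta t}$.) *)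

theory Defs
  imports "HOL-Analysis.Analysis"
begin

definition jbr :: "real \<Rightarrow> real" where
  "jbr a = sqrt (1 + a\<^sup>2)"

text \<open>Everything is expressed on the space-time Fourier side.
  An element u of X_{s,b} is represented by its Fourier transform
  F = u-hat :: int => real => complex  (F xi tau = u-hat(xi,tau)).\<close>
definition Xsb_sq :: "real \<Rightarrow> real \<Rightarrow> (int \<Rightarrow> real \<Rightarrow> complex) \<Rightarrow> ennreal" where
  "Xsb_sq s b F =
     (\<integral>\<^sup>+ \<xi>. (\<integral>\<^sup>+ \<tau>. ennreal ((1 / (2 * pi)) * jbr (real_of_int \<xi>) powr (2 * s)
                 * jbr (\<tau> - (real_of_int \<xi>)^3) powr (2 * b) * (cmod (F \<xi> \<tau>))\<^sup>2) \<partial>lborel)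
      \<partial>count_space UNIV)"

definition in_Xsb :: "real \<Rightarrow> real \<Rightarrow> (int \<Rightarrow> real \<Rightarrow> complex) \<Rightarrow> bool" where
  "in_Xsb s b F \<longleftrightarrow> (\<forall>\<xi>. F \<xi> \<in> borel_measurable lborel) \<and> Xsb_sq s b F < \<infinity>"

text \<open>Multiplication by a function phi(t) of time only, on the Fourier side:
  with phi-hat(tau) = int phi(t) e^{-i t tau} dt and u-hat(xi,tau) = int int u e^{-i(x xi + t tau)},
  (phi u)-hat(xi,tau) = (1/2pi) int phi-hat(tau - sigma) u-hat(xi,sigma) d sigma.\<close>
definition time_mult :: "(real \<Rightarrow> complex) \<Rightarrow> (int \<Rightarrow> real \<Rightarrow> complex) \<Rightarrow> (int \<Rightarrow> real \<Rightarrow> complex)" where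
  "time_mult \<phi>h F = (\<lambda>\<xi> \<tau>. complex_of_real (1 / (2 * pi)) *
       (\<integral> \<sigma>. \<phi>h (\<tau> - \<sigma>) * F \<xi> \<sigma> \<partial>lborel))"

text \<open>phi in H^beta(R), phi given through its Fourier transform phi-hat.\<close>
definition in_Hbeta :: "real \<Rightarrow> (real \<Rightarrow> complex) \<Rightarrow> bool" where
  "in_Hbeta \<beta> \<phi>h \<longleftrightarrow> \<phi>h \<in> borel_measurable lborel \<and>
     (\<integral>\<^sup>+ \<tau>. ennreal (jbr \<tau> powr (2 * \<beta>) * (cmod (\<phi>h \<tau>))\<^sup>2) \<partial>lborel) < \<infinity>"

end

theory Submission
  imports Defs
begin

text \<open>
  For fixed \<open>\<xi>\<close>, multiplication by \<open>\<phi>(t)\<close> is a convolution in \<open>\<tau>\<close> with \<open>\<phi>h\<close>, so after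
  the shift \<open>\<tau> \<mapsto> \<tau> - \<xi>\<^sup>3\<close> it suffices to bound \<open>|\<phi>h| * f\<close> in \<open>L\<^sup>2(\<langle>\<tau>\<rangle>\<^bsup>2b\<^esup>)\<close> by
  \<open>f\<close> in \<open>L\<^sup>2(\<langle>\<sigma>\<rangle>)\<close>. Since \<open>\<langle>\<tau>\<rangle>\<^bsup>b\<^esup>\<close> is at most a constant times \<open>\<langle>\<sigma>\<rangle>\<^bsup>b\<^esup>\<close> where
  \<open>|\<tau>| < 2|\<sigma>|\<close> and times \<open>\<langle>\<tau> - \<sigma>\<rangle>\<^bsup>b\<^esup>\<close> where \<open>|\<sigma>| \<le> |\<tau> - \<sigma>|\<close>, the weighted
  convolution splits into two kernels: \<open>|\<phi>h(\<tau> - \<sigma>)| \<langle>\<sigma>\<rangle>\<^bsup>b-1/2\<^esup>\<close>, bounded on \<open>L\<^sup>2\<close> by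
  the Schur test, and \<open>|\<phi>h(\<tau> - \<sigma>)| \<langle>\<tau> - \<sigma>\<rangle>\<^bsup>b\<^esup> \<langle>\<sigma>\<rangle>\<^bsup>-1/2\<^esup>\<close>, which is Hilbert--Schmidt.
  Choosing \<open>b < \<beta> < 1/2\<close>, Cauchy--Schwarz reduces both bounds to
  \<open>\<integral> \<langle>u\<rangle>\<^bsup>2\<beta>\<^esup> |\<phi>h u|\<^sup>2 < \<infinity>\<close> and \<open>\<integral> \<langle>u\<rangle>\<^bsup>2b-1-2\<beta>\<^esup> < \<infinity>\<close>.
\<close>

lemma jbr_ge_1: "1 \<le> jbr x"
  unfolding jbr_def by simp

lemma jbr_pos: "0 < jbr x"
  using jbr_ge_1[of x] by linarith

lemma jbr_neq_0 [simp]: "jbr x \<noteq> 0"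
  using jbr_pos[of x] by simp

lemma borel_measurable_jbr [measurable]: "jbr \<in> borel_measurable borel"
  unfolding jbr_def by measurable

lemma jbr_le_scaled:
  assumes c: "1 \<le> c" and xy: "\<bar>x\<bar> \<le> c * \<bar>y\<bar>"
  shows "jbr x \<le> c * jbr y"
proof -
  have "x\<^sup>2 \<le> (c * \<bar>y\<bar>)\<^sup>2"
    using xy by (metis abs_ge_zero power2_abs power_mono)
  moreover have "1 \<le> c\<^sup>2"
    using c by (simp add: one_le_power)
  ultimately have "1 + x\<^sup>2 \<le> (c * jbr y)\<^sup>2"
    unfolding jbr_def by (simp add: power_mult_distrib algebra_simps)
  then show ?thesis
    unfolding jbr_def[of x] using c jbr_pos[of y] by (intro real_le_lsqrt) auto
qed

lemma one_plus_abs_le_jbr: "1 + \<bar>x\<bar> \<le> 2 * jbr x"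
proof -
  have "2 * \<bar>x\<bar> \<le> 1 + x\<^sup>2"
    using sum_squares_bound[of "\<bar>x\<bar>" 1] by (simp add: power2_eq_square)
  then have "((1 + \<bar>x\<bar>) / 2)\<^sup>2 \<le> 1 + x\<^sup>2"
    by (simp add: power2_eq_square field_simps abs_mult_self_eq)
  then show ?thesis
    unfolding jbr_def using real_le_rsqrt by fastforce
qed

lemma jbr_powr_square: "(jbr x powr a)\<^sup>2 = jbr x powr (2 * a)"
  using jbr_pos[of x] by (simp add: powr_power)

lemma jbr_powr_mult_le:
  assumes "0 \<le> p" "0 \<le> q"
  shows "jbr x powr (- p) * jbr y powr (- q) \<le> jbr x powr (- (p + q)) + jbr y powr (- (p + q))"
proof -
  have "jbr x powr (- p) * jbr y powr (- q) \<le> max (jbr x powr (- (p + q))) (jbr y powr (- (p + q)))"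
  proof (cases "jbr x \<le> jbr y")
    case True
    then have "jbr y powr (- q) \<le> jbr x powr (- q)"
      using assms jbr_pos by (intro powr_mono2') auto
    then have "jbr x powr (- p) * jbr y powr (- q) \<le> jbr x powr (- p) * jbr x powr (- q)"
      by (simp add: mult_left_mono)
    then have "jbr x powr (- p) * jbr y powr (- q) \<le> jbr x powr (- (p + q))"
      by (simp add: powr_add[symmetric])
    then show ?thesis by simp
  next
    case False
    then have "jbr x powr (- p) \<le> jbr y powr (- p)"
      using assms jbr_pos by (intro powr_mono2') auto
    then have "jbr x powr (- p) * jbr y powr (- q) \<le> jbr y powr (- p) * jbr y powr (- q)"
      by (simp add: mult_right_mono)
    then have "jbr x powr (- p) * jbr y powr (- q) \<le> jbr y powr (- (p + q))"
      by (simp add: powr_add[symmetric])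
    then show ?thesis by simp
  qed
  also have "\<dots> \<le> jbr x powr (- (p + q)) + jbr y powr (- (p + q))"
    by simp
  finally show ?thesis .
qed

lemma nn_integral_lborel_translate:
  fixes h :: "real \<Rightarrow> ennreal"
  assumes [measurable]: "h \<in> borel_measurable borel"
  shows "(\<integral>\<^sup>+x. h (x + c) \<partial>lborel) = (\<integral>\<^sup>+x. h x \<partial>lborel)"
  using nn_integral_real_affine[of h 1 c] by (simp add: add.commute)

lemma nn_integral_lborel_reflect:
  fixes h :: "real \<Rightarrow> ennreal"
  assumes [measurable]: "h \<in> borel_measurable borel"
  shows "(\<integral>\<^sup>+x. h (c - x) \<partial>lborel) = (\<integral>\<^sup>+x. h x \<partial>lborel)"
  using nn_integral_real_affine[of h "-1" c] by simp

lemma nn_integral_lborel_convolution_variables: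
  fixes H :: "real \<times> real \<Rightarrow> ennreal"
  assumes [measurable]: "H \<in> borel_measurable (lborel \<Otimes>\<^sub>M lborel)"
  shows "(\<integral>\<^sup>+\<tau>. \<integral>\<^sup>+\<sigma>. H (\<tau> - \<sigma>, \<sigma>) \<partial>lborel \<partial>lborel) = (\<integral>\<^sup>+u. \<integral>\<^sup>+v. H (u, v) \<partial>lborel \<partial>lborel)"
proof -
  have "(\<integral>\<^sup>+\<tau>. \<integral>\<^sup>+\<sigma>. H (\<tau> - \<sigma>, \<sigma>) \<partial>lborel \<partial>lborel) = (\<integral>\<^sup>+\<sigma>. \<integral>\<^sup>+\<tau>. H (\<tau> - \<sigma>, \<sigma>) \<partial>lborel \<partial>lborel)"
    by (rule lborel_pair.Fubini'[symmetric]) measurable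
  also have "\<dots> = (\<integral>\<^sup>+\<sigma>. \<integral>\<^sup>+u. H (u, \<sigma>) \<partial>lborel \<partial>lborel)"
  proof (rule nn_integral_cong)
    fix \<sigma>
    show "(\<integral>\<^sup>+\<tau>. H (\<tau> - \<sigma>, \<sigma>) \<partial>lborel) = (\<integral>\<^sup>+u. H (u, \<sigma>) \<partial>lborel)"
      using nn_integral_lborel_translate[of "\<lambda>u. H (u, \<sigma>)" "- \<sigma>"] by simp
  qed
  also have "\<dots> = (\<integral>\<^sup>+u. \<integral>\<^sup>+v. H (u, v) \<partial>lborel \<partial>lborel)"
    by (rule lborel_pair.Fubini') measurable
  finally show ?thesis .
qed

lemma nn_integral_one_plus_powr_half_line:
  assumes r: "1 < r"
  shows "(\<integral>\<^sup>+x. ennreal ((1 + x) powr (- r)) * indicator {0..} x \<partial>lborel) = ennreal (1 / (r - 1))"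
proof -
  define F where "F x = - ((1 + x) powr (1 - r)) / (r - 1)" for x :: real
  have "(\<integral>\<^sup>+x. ennreal ((1 + x) powr (- r)) * indicator {0..} x \<partial>lborel) = ennreal (0 - F 0)"
  proof (rule nn_integral_FTC_atLeast)
    fix x :: real assume x: "0 \<le> x"
    have "DERIV (\<lambda>x. (1 + x) powr (1 - r)) x :> (1 - r) * (1 + x) powr (1 - r - of_nat 1) * 1"
      using x by (intro DERIV_fun_powr derivative_eq_intros) auto
    then have "DERIV F x :> - ((1 - r) * (1 + x) powr (1 - r - of_nat 1) * 1) / (r - 1)"
      unfolding F_def by (intro derivative_eq_intros) (use x r in auto)
    moreover have "- ((1 - r) * (1 + x) powr (1 - r - of_nat 1) * 1) / (r - 1) = (1 + x) powr (- r)"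
      using r by (simp add: field_simps)
    ultimately show "DERIV F x :> (1 + x) powr (- r)"
      by simp
  next
    have "((\<lambda>x. (1 + x) powr (1 - r)) \<longlongrightarrow> 0) at_top"
      using r by (intro tendsto_neg_powr filterlim_tendsto_add_at_top[OF tendsto_const filterlim_ident]) auto
    then show "(F \<longlongrightarrow> 0) at_top"
      unfolding F_def using r tendsto_divide[OF tendsto_minus tendsto_const, of _ 0 at_top "r - 1"] by auto
  qed auto
  then show ?thesis
    by (simp add: F_def)
qed

lemma nn_integral_lborel_jbr_powr_finite:
  assumes r: "1 < r"
  shows "(\<integral>\<^sup>+x. ennreal (jbr x powr (- r)) \<partial>lborel) < \<infinity>"
proof -
  define h where "h x = ennreal ((1 + x) powr (- r)) * indicator {0..} x" for x :: real
  have [measurable]: "h \<in> borel_measurable borel"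
    unfolding h_def by measurable
  have h_integral: "(\<integral>\<^sup>+x. h x \<partial>lborel) = ennreal (1 / (r - 1))"
    unfolding h_def by (rule nn_integral_one_plus_powr_half_line[OF r])
  have "ennreal (jbr x powr (- r)) \<le> ennreal (2 powr r) * (h x + h (- x))" for x
  proof -
    have "jbr x powr (- r) \<le> ((1 + \<bar>x\<bar>) / 2) powr (- r)"
      using r one_plus_abs_le_jbr[of x] by (intro powr_mono2') auto
    also have "\<dots> = 2 powr r * (1 + \<bar>x\<bar>) powr (- r)"
      by (simp add: powr_divide powr_minus field_simps)
    finally have "ennreal (jbr x powr (- r)) \<le> ennreal (2 powr r) * ennreal ((1 + \<bar>x\<bar>) powr (- r))"
      by (simp add: ennreal_mult[symmetric] ennreal_leI)
    also have "ennreal ((1 + \<bar>x\<bar>) powr (- r)) \<le> h x + h (- x)"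
      unfolding h_def by (cases "0 \<le> x") (auto simp: indicator_def)
    finally show ?thesis
      by (simp add: mult_left_mono)
  qed
  then have "(\<integral>\<^sup>+x. ennreal (jbr x powr (- r)) \<partial>lborel) \<le> (\<integral>\<^sup>+x. ennreal (2 powr r) * (h x + h (- x)) \<partial>lborel)"
    by (rule nn_integral_mono)
  also have "\<dots> = ennreal (2 powr r) * (2 * ennreal (1 / (r - 1)))"
    using nn_integral_lborel_reflect[of h 0] h_integral
    by (simp add: nn_integral_cmult nn_integral_add mult_2)
  also have "\<dots> < \<infinity>"
    by (simp add: ennreal_mult_less_top)
  finally show ?thesis .
qed

section \<open>Cauchy--Schwarz, Schur test and Hilbert--Schmidt bound\<close>

lemma Cauchy_Schwarz_nn_integral_weighted:
  fixes f g w :: "'a \<Rightarrow> real"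
  assumes [measurable]: "f \<in> borel_measurable M" "g \<in> borel_measurable M" "w \<in> borel_measurable M"
    and nonneg: "\<And>x. 0 \<le> f x" "\<And>x. 0 \<le> g x" and w_pos: "\<And>x. 0 < w x"
  shows "(\<integral>\<^sup>+x. ennreal (f x * g x) \<partial>M)\<^sup>2
    \<le> (\<integral>\<^sup>+x. ennreal (w x * (f x)\<^sup>2) \<partial>M) * (\<integral>\<^sup>+x. ennreal ((g x)\<^sup>2 / w x) \<partial>M)"
proof -
  have "ennreal (f x * g x) = ennreal (sqrt (w x) * f x) * ennreal (g x / sqrt (w x))" for x
  proof -
    have "f x * g x = (sqrt (w x) * f x) * (g x / sqrt (w x))"
      using w_pos[of x] by (simp add: field_simps)
    then have "ennreal (f x * g x) = ennreal ((sqrt (w x) * f x) * (g x / sqrt (w x)))"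
      by (rule arg_cong)
    also have "\<dots> = ennreal (sqrt (w x) * f x) * ennreal (g x / sqrt (w x))"
      using nonneg[of x] w_pos[of x] by (intro ennreal_mult') simp
    finally show ?thesis .
  qed
  then have "(\<integral>\<^sup>+x. ennreal (f x * g x) \<partial>M)
      = (\<integral>\<^sup>+x. ennreal (sqrt (w x) * f x) * ennreal (g x / sqrt (w x)) \<partial>M)"
    by simp
  also have "\<dots>\<^sup>2 \<le> (\<integral>\<^sup>+x. ennreal (sqrt (w x) * f x) ^ 2 \<partial>M) * (\<integral>\<^sup>+x. ennreal (g x / sqrt (w x)) ^ 2 \<partial>M)"
    by (rule Cauchy_Schwarz_nn_integral) measurable
  also have "\<dots> = (\<integral>\<^sup>+x. ennreal (w x * (f x)\<^sup>2) \<partial>M) * (\<integral>\<^sup>+x. ennreal ((g x)\<^sup>2 / w x) \<partial>M)"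
    using nonneg w_pos by (simp add: ennreal_power power_mult_distrib power_divide less_imp_le)
  finally show ?thesis .
qed

lemma (in pair_sigma_finite) Schur_test_nn_integral:
  fixes k :: "'a \<times> 'b \<Rightarrow> real" and G :: "'b \<Rightarrow> ennreal"
  assumes [measurable]: "k \<in> borel_measurable (M1 \<Otimes>\<^sub>M M2)" "G \<in> borel_measurable M2"
    and k_nonneg: "\<And>z. 0 \<le> k z"
    and rows: "\<And>x. x \<in> space M1 \<Longrightarrow> (\<integral>\<^sup>+y. ennreal (k (x, y)) \<partial>M2) \<le> C1"
    and columns: "\<And>y. y \<in> space M2 \<Longrightarrow> (\<integral>\<^sup>+x. ennreal (k (x, y)) \<partial>M1) \<le> C2"
  shows "(\<integral>\<^sup>+x. (\<integral>\<^sup>+y. ennreal (k (x, y)) * G y \<partial>M2)\<^sup>2 \<partial>M1) \<le> C1 * C2 * (\<integral>\<^sup>+y. (G y)\<^sup>2 \<partial>M2)"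
proof -
  have row_estimate: "(\<integral>\<^sup>+y. ennreal (k (x, y)) * G y \<partial>M2)\<^sup>2 \<le> C1 * (\<integral>\<^sup>+y. ennreal (k (x, y)) * (G y)\<^sup>2 \<partial>M2)"
    if x: "x \<in> space M1" for x
  proof -
    have "(\<integral>\<^sup>+y. ennreal (k (x, y)) * G y \<partial>M2)
        = (\<integral>\<^sup>+y. ennreal (sqrt (k (x, y))) * (ennreal (sqrt (k (x, y))) * G y) \<partial>M2)"
      by (intro nn_integral_cong) (simp add: mult.assoc[symmetric] ennreal_mult'[symmetric] k_nonneg)
    also have "\<dots>\<^sup>2 \<le> (\<integral>\<^sup>+y. ennreal (sqrt (k (x, y))) ^ 2 \<partial>M2) * (\<integral>\<^sup>+y. (ennreal (sqrt (k (x, y))) * G y) ^ 2 \<partial>M2)"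
      using x by (intro Cauchy_Schwarz_nn_integral) measurable
    also have "\<dots> = (\<integral>\<^sup>+y. ennreal (k (x, y)) \<partial>M2) * (\<integral>\<^sup>+y. ennreal (k (x, y)) * (G y)\<^sup>2 \<partial>M2)"
      by (simp add: ennreal_power power_mult_distrib k_nonneg)
    also have "\<dots> \<le> C1 * (\<integral>\<^sup>+y. ennreal (k (x, y)) * (G y)\<^sup>2 \<partial>M2)"
      using rows[OF x] by (rule mult_right_mono) simp
    finally show ?thesis .
  qed
  have "(\<integral>\<^sup>+x. (\<integral>\<^sup>+y. ennreal (k (x, y)) * G y \<partial>M2)\<^sup>2 \<partial>M1)
      \<le> (\<integral>\<^sup>+x. C1 * (\<integral>\<^sup>+y. ennreal (k (x, y)) * (G y)\<^sup>2 \<partial>M2) \<partial>M1)"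
    by (intro nn_integral_mono row_estimate)
  also have "\<dots> = C1 * (\<integral>\<^sup>+y. \<integral>\<^sup>+x. ennreal (k (x, y)) * (G y)\<^sup>2 \<partial>M1 \<partial>M2)"
    by (simp add: nn_integral_cmult Fubini')
  also have "\<dots> = C1 * (\<integral>\<^sup>+y. (\<integral>\<^sup>+x. ennreal (k (x, y)) \<partial>M1) * (G y)\<^sup>2 \<partial>M2)"
    by (intro arg_cong[where f="(*) C1"] nn_integral_cong nn_integral_multc) measurable
  also have "\<dots> \<le> C1 * (\<integral>\<^sup>+y. C2 * (G y)\<^sup>2 \<partial>M2)"
    by (intro mult_left_mono nn_integral_mono mult_right_mono columns) auto
  also have "\<dots> = C1 * C2 * (\<integral>\<^sup>+y. (G y)\<^sup>2 \<partial>M2)"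
    by (simp add: nn_integral_cmult mult.assoc)
  finally show ?thesis .
qed

lemma (in pair_sigma_finite) Hilbert_Schmidt_nn_integral:
  fixes k :: "'a \<times> 'b \<Rightarrow> real" and G :: "'b \<Rightarrow> ennreal"
  assumes [measurable]: "k \<in> borel_measurable (M1 \<Otimes>\<^sub>M M2)" "G \<in> borel_measurable M2"
  shows "(\<integral>\<^sup>+x. (\<integral>\<^sup>+y. ennreal (k (x, y)) * G y \<partial>M2)\<^sup>2 \<partial>M1)
    \<le> (\<integral>\<^sup>+x. \<integral>\<^sup>+y. (ennreal (k (x, y)))\<^sup>2 \<partial>M2 \<partial>M1) * (\<integral>\<^sup>+y. (G y)\<^sup>2 \<partial>M2)"
proof -
  have "(\<integral>\<^sup>+x. (\<integral>\<^sup>+y. ennreal (k (x, y)) * G y \<partial>M2)\<^sup>2 \<partial>M1)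
      \<le> (\<integral>\<^sup>+x. (\<integral>\<^sup>+y. (ennreal (k (x, y)))\<^sup>2 \<partial>M2) * (\<integral>\<^sup>+y. (G y)\<^sup>2 \<partial>M2) \<partial>M1)"
    by (intro nn_integral_mono Cauchy_Schwarz_nn_integral) measurable
  also have "\<dots> = (\<integral>\<^sup>+x. \<integral>\<^sup>+y. (ennreal (k (x, y)))\<^sup>2 \<partial>M2 \<partial>M1) * (\<integral>\<^sup>+y. (G y)\<^sup>2 \<partial>M2)"
    by (rule nn_integral_multc) measurable
  finally show ?thesis .
qed

section \<open>The weighted convolution estimate\<close>

lemma ennreal_le_sqrt_if_square_le:
  fixes X :: ennreal
  assumes "X\<^sup>2 \<le> ennreal c" and "0 \<le> c"
  shows "X \<le> ennreal (sqrt c)"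
proof (cases X)
  case (real x)
  with assms have "x\<^sup>2 \<le> c"
    by (simp add: ennreal_power)
  with real show ?thesis
    by (auto intro: ennreal_leI real_le_rsqrt)
qed (use assms in \<open>simp add: power2_eq_square top_unique\<close>)

lemma ennreal_add_square_le: "((x::ennreal) + y)\<^sup>2 \<le> 2 * (x\<^sup>2 + y\<^sup>2)"
proof -
  have "(x + y)\<^sup>2 = x\<^sup>2 + y\<^sup>2 + 2 * x * y"
    by (rule power2_sum)
  also have "\<dots> \<le> x\<^sup>2 + y\<^sup>2 + (x\<^sup>2 + y\<^sup>2)"
    using sum_of_squares_ge_ennreal by (rule add_left_mono)
  finally show ?thesis
    by (simp add: mult_2 add_ac)
qed

lemma jbr_powr_le_split:
  assumes "0 \<le> b"
  shows "jbr \<tau> powr b \<le> 2 powr b *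
    (jbr \<sigma> powr b * of_bool (\<bar>\<tau>\<bar> < 2 * \<bar>\<sigma>\<bar>) + jbr (\<tau> - \<sigma>) powr b * of_bool (\<bar>\<sigma>\<bar> \<le> \<bar>\<tau> - \<sigma>\<bar>))"
proof (cases "\<bar>\<tau>\<bar> < 2 * \<bar>\<sigma>\<bar>")
  case True
  then have "jbr \<tau> \<le> 2 * jbr \<sigma>"
    by (intro jbr_le_scaled) auto
  then have "jbr \<tau> powr b \<le> 2 powr b * jbr \<sigma> powr b"
    using assms jbr_pos[of \<tau>] by (metis powr_mono2 powr_mult less_imp_le two_realpow_ge_one zero_le_numeral)
  with True show ?thesis
    by (simp add: distrib_left add_increasing2)
next
  case False
  moreover have "\<bar>\<tau>\<bar> \<le> \<bar>\<tau> - \<sigma>\<bar> + \<bar>\<sigma>\<bar>"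
    using abs_triangle_ineq[of "\<tau> - \<sigma>" \<sigma>] by simp
  ultimately have \<sigma>_le: "\<bar>\<sigma>\<bar> \<le> \<bar>\<tau> - \<sigma>\<bar>" and "\<bar>\<tau>\<bar> \<le> 2 * \<bar>\<tau> - \<sigma>\<bar>"
    by auto
  then have "jbr \<tau> \<le> 2 * jbr (\<tau> - \<sigma>)"
    by (intro jbr_le_scaled) auto
  then have "jbr \<tau> powr b \<le> 2 powr b * jbr (\<tau> - \<sigma>) powr b"
    using assms jbr_pos[of \<tau>] by (metis powr_mono2 powr_mult less_imp_le zero_le_numeral)
  with False \<sigma>_le show ?thesis
    by simp
qed

locale weighted_convolution =
  fixes g :: "real \<Rightarrow> real" and b \<beta> :: real
  assumes g_measurable [measurable]: "g \<in> borel_measurable borel"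
    and g_nonneg: "\<And>u. 0 \<le> g u"
    and b_nonneg: "0 \<le> b" and b_less_\<beta>: "b < \<beta>" and \<beta>_less_half: "\<beta> < 1/2"
    and g_weighted_L2: "(\<integral>\<^sup>+u. ennreal (jbr u powr (2 * \<beta>) * (g u)\<^sup>2) \<partial>lborel) < \<infinity>"
begin

definition A :: real where
  "A = enn2real (\<integral>\<^sup>+u. ennreal (jbr u powr (2 * \<beta>) * (g u)\<^sup>2) \<partial>lborel)"

definition K :: real where
  "K = enn2real (\<integral>\<^sup>+u. ennreal (jbr u powr (2 * b - 1 - 2 * \<beta>)) \<partial>lborel)"

lemma nn_integral_eq_A: "(\<integral>\<^sup>+u. ennreal (jbr u powr (2 * \<beta>) * (g u)\<^sup>2) \<partial>lborel) = ennreal A"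
  using g_weighted_L2 unfolding A_def by simp

lemma nn_integral_eq_K: "(\<integral>\<^sup>+u. ennreal (jbr u powr (2 * b - 1 - 2 * \<beta>)) \<partial>lborel) = ennreal K"
proof -
  have "(\<integral>\<^sup>+u. ennreal (jbr u powr (- (2 * \<beta> + 1 - 2 * b))) \<partial>lborel) < \<infinity>"
    using b_less_\<beta> by (intro nn_integral_lborel_jbr_powr_finite) simp
  then show ?thesis
    unfolding K_def by (simp add: algebra_simps)
qed

lemma A_nonneg [simp]: "0 \<le> A" and K_nonneg [simp]: "0 \<le> K"
  unfolding A_def K_def by simp_all

lemma g_Cauchy_Schwarz:
  assumes [measurable]: "h \<in> borel_measurable borel" and h_nonneg: "\<And>u. 0 \<le> h u"
  shows "(\<integral>\<^sup>+u. ennreal (g u * h u) \<partial>lborel)\<^sup>2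
    \<le> ennreal A * (\<integral>\<^sup>+u. ennreal ((h u)\<^sup>2 / jbr u powr (2 * \<beta>)) \<partial>lborel)"
  using Cauchy_Schwarz_nn_integral_weighted[of g lborel h "\<lambda>u. jbr u powr (2 * \<beta>)"]
  by (simp add: nn_integral_eq_A g_nonneg h_nonneg jbr_pos)

text \<open>On the support of \<open>kernel_sigma\<close> the weight \<open>\<langle>\<tau>\<rangle>\<^bsup>b\<^esup>\<close> is controlled by \<open>\<langle>\<sigma>\<rangle>\<^bsup>b\<^esup>\<close>,
  on that of \<open>kernel_phi\<close> by the modulation \<open>\<langle>\<tau> - \<sigma>\<rangle>\<^bsup>b\<^esup>\<close> carried by \<open>\<phi>\<close>.\<close>

definition kernel_sigma :: "real \<times> real \<Rightarrow> real" where
  "kernel_sigma = (\<lambda>(\<tau>, \<sigma>). g (\<tau> - \<sigma>) * jbr \<sigma> powr (b - 1/2) * of_bool (\<bar>\<tau>\<bar> < 2 * \<bar>\<sigma>\<bar>))"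

definition kernel_phi :: "real \<times> real \<Rightarrow> real" where
  "kernel_phi = (\<lambda>(\<tau>, \<sigma>). g (\<tau> - \<sigma>) * jbr (\<tau> - \<sigma>) powr b * jbr \<sigma> powr (- 1/2) * of_bool (\<bar>\<sigma>\<bar> \<le> \<bar>\<tau> - \<sigma>\<bar>))"

lemma kernel_sigma_measurable [measurable]: "kernel_sigma \<in> borel_measurable (lborel \<Otimes>\<^sub>M lborel)"
  and kernel_phi_measurable [measurable]: "kernel_phi \<in> borel_measurable (lborel \<Otimes>\<^sub>M lborel)"
  unfolding kernel_sigma_def kernel_phi_def by measurable

lemma kernel_sigma_nonneg: "0 \<le> kernel_sigma z" and kernel_phi_nonneg: "0 \<le> kernel_phi z"
  unfolding kernel_sigma_def kernel_phi_def by (auto simp: g_nonneg split: prod.split)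

lemma weight_le_kernels:
  assumes "0 \<le> y"
  shows "jbr \<tau> powr b * (g (\<tau> - \<sigma>) * y)
    \<le> 2 powr b * ((kernel_sigma (\<tau>, \<sigma>) + kernel_phi (\<tau>, \<sigma>)) * (jbr \<sigma> powr (1/2) * y))"
proof -
  have "jbr \<sigma> powr (b - 1/2) * jbr \<sigma> powr (1/2) = jbr \<sigma> powr b"
    and "jbr \<sigma> powr (- 1/2) * jbr \<sigma> powr (1/2) = 1"
    by (simp_all add: powr_add[symmetric] jbr_pos)
  then have kernels: "(kernel_sigma (\<tau>, \<sigma>) + kernel_phi (\<tau>, \<sigma>)) * (jbr \<sigma> powr (1/2) * y) = g (\<tau> - \<sigma>) * y *
      (jbr \<sigma> powr b * of_bool (\<bar>\<tau>\<bar> < 2 * \<bar>\<sigma>\<bar>) + jbr (\<tau> - \<sigma>) powr b * of_bool (\<bar>\<sigma>\<bar> \<le> \<bar>\<tau> - \<sigma>\<bar>))"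
    unfolding kernel_sigma_def kernel_phi_def by (simp add: algebra_simps)
  have "jbr \<tau> powr b * (g (\<tau> - \<sigma>) * y) \<le> 2 powr b *
      (jbr \<sigma> powr b * of_bool (\<bar>\<tau>\<bar> < 2 * \<bar>\<sigma>\<bar>) + jbr (\<tau> - \<sigma>) powr b * of_bool (\<bar>\<sigma>\<bar> \<le> \<bar>\<tau> - \<sigma>\<bar>))
      * (g (\<tau> - \<sigma>) * y)"
    using assms g_nonneg by (intro mult_right_mono jbr_powr_le_split b_nonneg) simp
  also have "\<dots> = 2 powr b * ((kernel_sigma (\<tau>, \<sigma>) + kernel_phi (\<tau>, \<sigma>)) * (jbr \<sigma> powr (1/2) * y))"
    unfolding kernels by (simp only: mult_ac)
  finally show ?thesis .
qed

lemma weight_ratio_le: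
  "jbr v powr (2 * b - 1) / jbr u powr (2 * \<beta>) \<le> jbr u powr (2 * b - 1 - 2 * \<beta>) + jbr v powr (2 * b - 1 - 2 * \<beta>)"
proof -
  have "jbr v powr (2 * b - 1) / jbr u powr (2 * \<beta>) = jbr u powr (- (2 * \<beta>)) * jbr v powr (- (1 - 2 * b))"
    by (simp add: powr_minus_divide)
  also have "\<dots> \<le> jbr u powr (- (2 * \<beta> + (1 - 2 * b))) + jbr v powr (- (2 * \<beta> + (1 - 2 * b)))"
    using b_nonneg b_less_\<beta> \<beta>_less_half by (intro jbr_powr_mult_le) auto
  finally show ?thesis
    by (simp add: algebra_simps)
qed

lemma jbr_powr_le_near:
  assumes "\<bar>\<tau>\<bar> < 2 * \<bar>\<sigma>\<bar>"
  shows "jbr \<sigma> powr (b - 1/2) \<le> 3 powr (1/2 - b) * jbr (\<tau> - \<sigma>) powr (b - 1/2)"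
proof -
  have "\<bar>\<tau> - \<sigma>\<bar> \<le> 3 * \<bar>\<sigma>\<bar>"
    using assms by linarith
  then have "jbr (\<tau> - \<sigma>) \<le> 3 * jbr \<sigma>"
    by (intro jbr_le_scaled) auto
  then have "(3 * jbr \<sigma>) powr (b - 1/2) \<le> jbr (\<tau> - \<sigma>) powr (b - 1/2)"
    using \<beta>_less_half b_less_\<beta> jbr_pos by (intro powr_mono2') auto
  then have "3 powr (1/2 - b) * (3 powr (b - 1/2) * jbr \<sigma> powr (b - 1/2))
      \<le> 3 powr (1/2 - b) * jbr (\<tau> - \<sigma>) powr (b - 1/2)"
    by (simp add: powr_mult)
  then show ?thesis
    by (simp add: mult.assoc[symmetric] powr_add[symmetric])
qed

lemma kernel_sigma_row_bound:
  "(\<integral>\<^sup>+\<sigma>. ennreal (kernel_sigma (\<tau>, \<sigma>)) \<partial>lborel) \<le> ennreal (sqrt (2 * A * K))"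
proof (rule ennreal_le_sqrt_if_square_le)
  have "(\<integral>\<^sup>+\<sigma>. ennreal (kernel_sigma (\<tau>, \<sigma>)) \<partial>lborel)
      \<le> (\<integral>\<^sup>+\<sigma>. ennreal (g (\<tau> - \<sigma>) * jbr \<sigma> powr (b - 1/2)) \<partial>lborel)"
    by (intro nn_integral_mono ennreal_leI) (simp add: kernel_sigma_def g_nonneg)
  also have "\<dots> = (\<integral>\<^sup>+u. ennreal (g u * jbr (\<tau> - u) powr (b - 1/2)) \<partial>lborel)"
    using nn_integral_lborel_reflect[of "\<lambda>u. ennreal (g u * jbr (\<tau> - u) powr (b - 1/2))" \<tau>] by simp
  finally have "(\<integral>\<^sup>+\<sigma>. ennreal (kernel_sigma (\<tau>, \<sigma>)) \<partial>lborel)\<^sup>2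
      \<le> (\<integral>\<^sup>+u. ennreal (g u * jbr (\<tau> - u) powr (b - 1/2)) \<partial>lborel)\<^sup>2"
    by (rule power_mono) simp
  also have "\<dots> \<le> ennreal A * (\<integral>\<^sup>+u. ennreal (jbr (\<tau> - u) powr (2 * b - 1) / jbr u powr (2 * \<beta>)) \<partial>lborel)"
    using g_Cauchy_Schwarz[of "\<lambda>u. jbr (\<tau> - u) powr (b - 1/2)"] by (simp add: jbr_powr_square algebra_simps)
  also have "\<dots> \<le> ennreal A * (ennreal K + ennreal K)"
  proof (rule mult_left_mono)
    have "(\<integral>\<^sup>+u. ennreal (jbr (\<tau> - u) powr (2 * b - 1) / jbr u powr (2 * \<beta>)) \<partial>lborel)
        \<le> (\<integral>\<^sup>+u. ennreal (jbr u powr (2 * b - 1 - 2 * \<beta>)) + ennreal (jbr (\<tau> - u) powr (2 * b - 1 - 2 * \<beta>)) \<partial>lborel)"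
      by (intro nn_integral_mono) (simp add: weight_ratio_le flip: ennreal_plus)
    also have "\<dots> = ennreal K + ennreal K"
      using nn_integral_lborel_reflect[of "\<lambda>u. ennreal (jbr u powr (2 * b - 1 - 2 * \<beta>))" \<tau>]
      by (simp add: nn_integral_add nn_integral_eq_K)
    finally show "(\<integral>\<^sup>+u. ennreal (jbr (\<tau> - u) powr (2 * b - 1) / jbr u powr (2 * \<beta>)) \<partial>lborel)
        \<le> ennreal K + ennreal K" .
  qed simp
  also have "\<dots> = ennreal (2 * A * K)"
    by (simp add: ennreal_mult mult_ac flip: ennreal_plus)
  finally show "(\<integral>\<^sup>+\<sigma>. ennreal (kernel_sigma (\<tau>, \<sigma>)) \<partial>lborel)\<^sup>2 \<le> ennreal (2 * A * K)" .
qed simp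

lemma kernel_sigma_column_bound:
  "(\<integral>\<^sup>+\<tau>. ennreal (kernel_sigma (\<tau>, \<sigma>)) \<partial>lborel) \<le> ennreal (3 powr (1/2 - b) * sqrt (A * K))"
proof -
  have "(\<integral>\<^sup>+u. ennreal (g u * jbr u powr (b - 1/2)) \<partial>lborel)\<^sup>2
      \<le> ennreal A * (\<integral>\<^sup>+u. ennreal (jbr u powr (2 * b - 1) / jbr u powr (2 * \<beta>)) \<partial>lborel)"
    using g_Cauchy_Schwarz[of "\<lambda>u. jbr u powr (b - 1/2)"] by (simp add: jbr_powr_square algebra_simps)
  also have "\<dots> = ennreal (A * K)"
    by (simp add: powr_diff[symmetric] nn_integral_eq_K ennreal_mult)
  finally have CS: "(\<integral>\<^sup>+u. ennreal (g u * jbr u powr (b - 1/2)) \<partial>lborel) \<le> ennreal (sqrt (A * K))"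
    by (intro ennreal_le_sqrt_if_square_le) auto
  have "(\<integral>\<^sup>+\<tau>. ennreal (kernel_sigma (\<tau>, \<sigma>)) \<partial>lborel)
      \<le> (\<integral>\<^sup>+\<tau>. ennreal (3 powr (1/2 - b)) * ennreal (g (\<tau> - \<sigma>) * jbr (\<tau> - \<sigma>) powr (b - 1/2)) \<partial>lborel)"
  proof (intro nn_integral_mono)
    fix \<tau>
    have "kernel_sigma (\<tau>, \<sigma>) \<le> 3 powr (1/2 - b) * (g (\<tau> - \<sigma>) * jbr (\<tau> - \<sigma>) powr (b - 1/2))"
      using mult_left_mono[OF jbr_powr_le_near g_nonneg, of \<tau> \<sigma> "\<tau> - \<sigma>"]
      by (auto simp: kernel_sigma_def g_nonneg mult_ac)
    then show "ennreal (kernel_sigma (\<tau>, \<sigma>)) \<le> ennreal (3 powr (1/2 - b)) * ennreal (g (\<tau> - \<sigma>) * jbr (\<tau> - \<sigma>) powr (b - 1/2))"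
      by (simp add: ennreal_mult'[symmetric] ennreal_leI)
  qed
  also have "\<dots> = ennreal (3 powr (1/2 - b)) * (\<integral>\<^sup>+u. ennreal (g u * jbr u powr (b - 1/2)) \<partial>lborel)"
    using nn_integral_lborel_translate[of "\<lambda>u. ennreal (g u * jbr u powr (b - 1/2))" "- \<sigma>"]
    by (simp add: nn_integral_cmult)
  also have "\<dots> \<le> ennreal (3 powr (1/2 - b) * sqrt (A * K))"
    using CS by (simp add: mult_left_mono ennreal_mult)
  finally show ?thesis .
qed

lemma kernel_phi_pointwise_bound:
  "(g u * jbr u powr b * jbr v powr (- 1/2) * of_bool (\<bar>v\<bar> \<le> \<bar>u\<bar>))\<^sup>2
    \<le> jbr u powr (2 * \<beta>) * (g u)\<^sup>2 * jbr v powr (2 * b - 1 - 2 * \<beta>)"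
proof (cases "\<bar>v\<bar> \<le> \<bar>u\<bar>")
  case True
  then have "jbr v powr (2 * \<beta> - 2 * b) \<le> jbr u powr (2 * \<beta> - 2 * b)"
    using b_less_\<beta> jbr_pos unfolding jbr_def by (intro powr_mono2) (auto simp: abs_le_square_iff)
  then have "(g u)\<^sup>2 * jbr u powr (2 * b) * (jbr v powr (2 * b - 1 - 2 * \<beta>) * jbr v powr (2 * \<beta> - 2 * b))
      \<le> (g u)\<^sup>2 * jbr u powr (2 * b) * (jbr v powr (2 * b - 1 - 2 * \<beta>) * jbr u powr (2 * \<beta> - 2 * b))"
    by (intro mult_left_mono) auto
  moreover have "(g u * jbr u powr b * jbr v powr (- 1/2) * of_bool (\<bar>v\<bar> \<le> \<bar>u\<bar>))\<^sup>2
      = (g u)\<^sup>2 * jbr u powr (2 * b) * (jbr v powr (2 * b - 1 - 2 * \<beta>) * jbr v powr (2 * \<beta> - 2 * b))"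
    using True by (simp only: of_bool_eq(2) mult_1_right power_mult_distrib jbr_powr_square) (simp flip: powr_add)
  moreover have "(g u)\<^sup>2 * jbr u powr (2 * b) * (jbr v powr (2 * b - 1 - 2 * \<beta>) * jbr u powr (2 * \<beta> - 2 * b))
      = jbr u powr (2 * \<beta>) * (g u)\<^sup>2 * jbr v powr (2 * b - 1 - 2 * \<beta>)"
    by (simp add: mult_ac flip: powr_add)
  ultimately show ?thesis
    by simp
qed simp

lemma kernel_phi_square_integral:
  "(\<integral>\<^sup>+\<tau>. \<integral>\<^sup>+\<sigma>. (ennreal (kernel_phi (\<tau>, \<sigma>)))\<^sup>2 \<partial>lborel \<partial>lborel) \<le> ennreal (A * K)"
proof -
  define H where "H = (\<lambda>(u, v). (ennreal (g u * jbr u powr b * jbr v powr (- 1/2) * of_bool (\<bar>v\<bar> \<le> \<bar>u\<bar>)))\<^sup>2)"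
  have [measurable]: "H \<in> borel_measurable (lborel \<Otimes>\<^sub>M lborel)"
    unfolding H_def by measurable
  have "(\<integral>\<^sup>+\<tau>. \<integral>\<^sup>+\<sigma>. (ennreal (kernel_phi (\<tau>, \<sigma>)))\<^sup>2 \<partial>lborel \<partial>lborel)
      = (\<integral>\<^sup>+\<tau>. \<integral>\<^sup>+\<sigma>. H (\<tau> - \<sigma>, \<sigma>) \<partial>lborel \<partial>lborel)"
    by (simp add: H_def kernel_phi_def)
  also have "\<dots> = (\<integral>\<^sup>+u. \<integral>\<^sup>+v. H (u, v) \<partial>lborel \<partial>lborel)"
    by (rule nn_integral_lborel_convolution_variables) measurable
  also have "\<dots> \<le> (\<integral>\<^sup>+u. \<integral>\<^sup>+v. ennreal (jbr u powr (2 * \<beta>) * (g u)\<^sup>2) * ennreal (jbr v powr (2 * b - 1 - 2 * \<beta>)) \<partial>lborel \<partial>lborel)"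
    using kernel_phi_pointwise_bound g_nonneg
    by (intro nn_integral_mono) (simp add: H_def ennreal_power ennreal_leI flip: ennreal_mult)
  also have "\<dots> = ennreal A * ennreal K"
    by (simp add: nn_integral_cmult nn_integral_multc nn_integral_eq_A nn_integral_eq_K)
  finally show ?thesis
    by (simp add: ennreal_mult)
qed

lemma kernel_sigma_operator_bound:
  assumes [measurable]: "G \<in> borel_measurable borel"
  shows "(\<integral>\<^sup>+\<tau>. (\<integral>\<^sup>+\<sigma>. ennreal (kernel_sigma (\<tau>, \<sigma>)) * G \<sigma> \<partial>lborel)\<^sup>2 \<partial>lborel)
    \<le> ennreal (sqrt (2 * A * K)) * ennreal (3 powr (1/2 - b) * sqrt (A * K)) * (\<integral>\<^sup>+\<sigma>. (G \<sigma>)\<^sup>2 \<partial>lborel)"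
  by (rule lborel_pair.Schur_test_nn_integral)
    (simp_all add: kernel_sigma_nonneg kernel_sigma_row_bound kernel_sigma_column_bound)

lemma kernel_phi_operator_bound:
  assumes [measurable]: "G \<in> borel_measurable borel"
  shows "(\<integral>\<^sup>+\<tau>. (\<integral>\<^sup>+\<sigma>. ennreal (kernel_phi (\<tau>, \<sigma>)) * G \<sigma> \<partial>lborel)\<^sup>2 \<partial>lborel)
    \<le> ennreal (A * K) * (\<integral>\<^sup>+\<sigma>. (G \<sigma>)\<^sup>2 \<partial>lborel)"
proof -
  have "(\<integral>\<^sup>+\<tau>. (\<integral>\<^sup>+\<sigma>. ennreal (kernel_phi (\<tau>, \<sigma>)) * G \<sigma> \<partial>lborel)\<^sup>2 \<partial>lborel)
      \<le> (\<integral>\<^sup>+\<tau>. \<integral>\<^sup>+\<sigma>. (ennreal (kernel_phi (\<tau>, \<sigma>)))\<^sup>2 \<partial>lborel \<partial>lborel) * (\<integral>\<^sup>+\<sigma>. (G \<sigma>)\<^sup>2 \<partial>lborel)"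
    by (rule lborel_pair.Hilbert_Schmidt_nn_integral) measurable
  also have "\<dots> \<le> ennreal (A * K) * (\<integral>\<^sup>+\<sigma>. (G \<sigma>)\<^sup>2 \<partial>lborel)"
    by (intro mult_right_mono kernel_phi_square_integral) simp
  finally show ?thesis .
qed

lemma weighted_convolution_le_kernels:
  assumes [measurable]: "f \<in> borel_measurable borel" and f_nonneg: "\<And>\<sigma>. 0 \<le> f \<sigma>"
  shows "ennreal (jbr \<tau> powr (2 * b)) * (\<integral>\<^sup>+\<sigma>. ennreal (g (\<tau> - \<sigma>) * f \<sigma>) \<partial>lborel)\<^sup>2
    \<le> ennreal (2 * (2 powr b)\<^sup>2) *
      ((\<integral>\<^sup>+\<sigma>. ennreal (kernel_sigma (\<tau>, \<sigma>)) * ennreal (jbr \<sigma> powr (1/2) * f \<sigma>) \<partial>lborel)\<^sup>2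
      + (\<integral>\<^sup>+\<sigma>. ennreal (kernel_phi (\<tau>, \<sigma>)) * ennreal (jbr \<sigma> powr (1/2) * f \<sigma>) \<partial>lborel)\<^sup>2)"
    (is "_ \<le> _ * ((?X)\<^sup>2 + (?Y)\<^sup>2)")
proof -
  have "ennreal (jbr \<tau> powr b) * (\<integral>\<^sup>+\<sigma>. ennreal (g (\<tau> - \<sigma>) * f \<sigma>) \<partial>lborel)
      = (\<integral>\<^sup>+\<sigma>. ennreal (jbr \<tau> powr b * (g (\<tau> - \<sigma>) * f \<sigma>)) \<partial>lborel)"
    by (subst nn_integral_cmult[symmetric]) (simp_all add: ennreal_mult')
  also have "\<dots> \<le> (\<integral>\<^sup>+\<sigma>. ennreal (2 powr b) * (ennreal (kernel_sigma (\<tau>, \<sigma>)) * ennreal (jbr \<sigma> powr (1/2) * f \<sigma>)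
      + ennreal (kernel_phi (\<tau>, \<sigma>)) * ennreal (jbr \<sigma> powr (1/2) * f \<sigma>)) \<partial>lborel)"
  proof (intro nn_integral_mono)
    fix \<sigma>
    have "ennreal (jbr \<tau> powr b * (g (\<tau> - \<sigma>) * f \<sigma>))
        \<le> ennreal (2 powr b * ((kernel_sigma (\<tau>, \<sigma>) + kernel_phi (\<tau>, \<sigma>)) * (jbr \<sigma> powr (1/2) * f \<sigma>)))"
      using f_nonneg by (intro ennreal_leI weight_le_kernels)
    then show "ennreal (jbr \<tau> powr b * (g (\<tau> - \<sigma>) * f \<sigma>))
        \<le> ennreal (2 powr b) * (ennreal (kernel_sigma (\<tau>, \<sigma>)) * ennreal (jbr \<sigma> powr (1/2) * f \<sigma>)
          + ennreal (kernel_phi (\<tau>, \<sigma>)) * ennreal (jbr \<sigma> powr (1/2) * f \<sigma>))"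
      using kernel_sigma_nonneg kernel_phi_nonneg f_nonneg by (simp add: distrib_right ennreal_mult)
  qed
  also have "\<dots> = ennreal (2 powr b) * (?X + ?Y)"
    by (simp add: nn_integral_cmult nn_integral_add)
  finally have "(ennreal (jbr \<tau> powr b) * (\<integral>\<^sup>+\<sigma>. ennreal (g (\<tau> - \<sigma>) * f \<sigma>) \<partial>lborel))\<^sup>2
      \<le> (ennreal (2 powr b) * (?X + ?Y))\<^sup>2"
    by (rule power_mono) simp
  also have "\<dots> \<le> ennreal ((2 powr b)\<^sup>2) * (2 * ((?X)\<^sup>2 + (?Y)\<^sup>2))"
    unfolding power_mult_distrib ennreal_power[OF powr_ge_zero, symmetric]
    by (intro mult_left_mono ennreal_add_square_le) simp
  also have "\<dots> = ennreal (2 * (2 powr b)\<^sup>2) * ((?X)\<^sup>2 + (?Y)\<^sup>2)"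
    by (simp add: ennreal_mult algebra_simps)
  finally show ?thesis
    by (simp add: power_mult_distrib ennreal_power jbr_powr_square)
qed

definition convolution_constant :: real where
  "convolution_constant = 2 * (2 powr b)\<^sup>2 * (sqrt (2 * A * K) * (3 powr (1/2 - b) * sqrt (A * K)) + A * K)"

lemma convolution_constant_nonneg: "0 \<le> convolution_constant"
  unfolding convolution_constant_def by simp

lemma weighted_convolution_estimate_centered:
  assumes [measurable]: "f \<in> borel_measurable borel" and f_nonneg: "\<And>\<sigma>. 0 \<le> f \<sigma>"
  shows "(\<integral>\<^sup>+\<tau>. ennreal (jbr \<tau> powr (2 * b)) * (\<integral>\<^sup>+\<sigma>. ennreal (g (\<tau> - \<sigma>) * f \<sigma>) \<partial>lborel)\<^sup>2 \<partial>lborel)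
    \<le> ennreal convolution_constant * (\<integral>\<^sup>+\<sigma>. ennreal (jbr \<sigma> * (f \<sigma>)\<^sup>2) \<partial>lborel)"
proof -
  define G where "G \<sigma> = ennreal (jbr \<sigma> powr (1/2) * f \<sigma>)" for \<sigma>
  define X where "X \<tau> = (\<integral>\<^sup>+\<sigma>. ennreal (kernel_sigma (\<tau>, \<sigma>)) * G \<sigma> \<partial>lborel)" for \<tau>
  define Y where "Y \<tau> = (\<integral>\<^sup>+\<sigma>. ennreal (kernel_phi (\<tau>, \<sigma>)) * G \<sigma> \<partial>lborel)" for \<tau>
  have [measurable]: "G \<in> borel_measurable borel"
    unfolding G_def by measurable
  have G_square: "(\<integral>\<^sup>+\<sigma>. (G \<sigma>)\<^sup>2 \<partial>lborel) = (\<integral>\<^sup>+\<sigma>. ennreal (jbr \<sigma> * (f \<sigma>)\<^sup>2) \<partial>lborel)"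
    using jbr_pos by (simp add: G_def ennreal_power f_nonneg power_mult_distrib jbr_powr_square less_imp_le)
  have "(\<integral>\<^sup>+\<tau>. ennreal (jbr \<tau> powr (2 * b)) * (\<integral>\<^sup>+\<sigma>. ennreal (g (\<tau> - \<sigma>) * f \<sigma>) \<partial>lborel)\<^sup>2 \<partial>lborel)
      \<le> (\<integral>\<^sup>+\<tau>. ennreal (2 * (2 powr b)\<^sup>2) * ((X \<tau>)\<^sup>2 + (Y \<tau>)\<^sup>2) \<partial>lborel)"
    unfolding X_def Y_def G_def by (intro nn_integral_mono weighted_convolution_le_kernels f_nonneg) simp
  also have "\<dots> = ennreal (2 * (2 powr b)\<^sup>2) * ((\<integral>\<^sup>+\<tau>. (X \<tau>)\<^sup>2 \<partial>lborel) + (\<integral>\<^sup>+\<tau>. (Y \<tau>)\<^sup>2 \<partial>lborel))"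
    by (simp add: X_def Y_def nn_integral_cmult nn_integral_add)
  also have "\<dots> \<le> ennreal (2 * (2 powr b)\<^sup>2) *
      (ennreal (sqrt (2 * A * K)) * ennreal (3 powr (1/2 - b) * sqrt (A * K)) * (\<integral>\<^sup>+\<sigma>. (G \<sigma>)\<^sup>2 \<partial>lborel)
      + ennreal (A * K) * (\<integral>\<^sup>+\<sigma>. (G \<sigma>)\<^sup>2 \<partial>lborel))"
    unfolding X_def Y_def
    by (intro mult_left_mono add_mono kernel_sigma_operator_bound kernel_phi_operator_bound) simp_all
  also have "\<dots> = ennreal convolution_constant * (\<integral>\<^sup>+\<sigma>. (G \<sigma>)\<^sup>2 \<partial>lborel)"
    unfolding convolution_constant_def by (simp add: ennreal_mult algebra_simps)
  finally show ?thesis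
    unfolding G_square .
qed

lemma weighted_convolution_estimate:
  assumes [measurable]: "f \<in> borel_measurable borel" and f_nonneg: "\<And>\<sigma>. 0 \<le> f \<sigma>"
  shows "(\<integral>\<^sup>+\<tau>. ennreal (jbr (\<tau> - a) powr (2 * b)) * (\<integral>\<^sup>+\<sigma>. ennreal (g (\<tau> - \<sigma>) * f \<sigma>) \<partial>lborel)\<^sup>2 \<partial>lborel)
    \<le> ennreal convolution_constant * (\<integral>\<^sup>+\<sigma>. ennreal (jbr (\<sigma> - a) * (f \<sigma>)\<^sup>2) \<partial>lborel)"
proof -
  have inner: "(\<integral>\<^sup>+\<sigma>. ennreal (g (\<tau> + a - \<sigma>) * f \<sigma>) \<partial>lborel) = (\<integral>\<^sup>+\<sigma>. ennreal (g (\<tau> - \<sigma>) * f (\<sigma> + a)) \<partial>lborel)" for \<tau>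
    using nn_integral_lborel_translate[of "\<lambda>\<sigma>. ennreal (g (\<tau> + a - \<sigma>) * f \<sigma>)" a] by simp
  have "(\<integral>\<^sup>+\<tau>. ennreal (jbr (\<tau> - a) powr (2 * b)) * (\<integral>\<^sup>+\<sigma>. ennreal (g (\<tau> - \<sigma>) * f \<sigma>) \<partial>lborel)\<^sup>2 \<partial>lborel)
      = (\<integral>\<^sup>+\<tau>. ennreal (jbr \<tau> powr (2 * b)) * (\<integral>\<^sup>+\<sigma>. ennreal (g (\<tau> - \<sigma>) * f (\<sigma> + a)) \<partial>lborel)\<^sup>2 \<partial>lborel)"
    using nn_integral_lborel_translate[of
        "\<lambda>\<tau>. ennreal (jbr (\<tau> - a) powr (2 * b)) * (\<integral>\<^sup>+\<sigma>. ennreal (g (\<tau> - \<sigma>) * f \<sigma>) \<partial>lborel)\<^sup>2" a]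
    by (simp add: inner)
  also have "\<dots> \<le> ennreal convolution_constant * (\<integral>\<^sup>+\<sigma>. ennreal (jbr \<sigma> * (f (\<sigma> + a))\<^sup>2) \<partial>lborel)"
    using f_nonneg by (intro weighted_convolution_estimate_centered) simp_all
  also have "(\<integral>\<^sup>+\<sigma>. ennreal (jbr \<sigma> * (f (\<sigma> + a))\<^sup>2) \<partial>lborel) = (\<integral>\<^sup>+\<sigma>. ennreal (jbr (\<sigma> - a) * (f \<sigma>)\<^sup>2) \<partial>lborel)"
    using nn_integral_lborel_translate[of "\<lambda>\<sigma>. ennreal (jbr (\<sigma> - a) * (f \<sigma>)\<^sup>2)" a] by simp
  finally show ?thesis .
qed

end

section \<open>Multiplication by a function of time\<close>

lemma norm_time_mult_le:
  "ennreal (cmod (time_mult \<phi>h F \<xi> \<tau>))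
    \<le> ennreal (1 / (2 * pi)) * (\<integral>\<^sup>+\<sigma>. ennreal (cmod (\<phi>h (\<tau> - \<sigma>)) * cmod (F \<xi> \<sigma>)) \<partial>lborel)"
proof -
  have "ennreal (cmod (\<integral>\<sigma>. \<phi>h (\<tau> - \<sigma>) * F \<xi> \<sigma> \<partial>lborel))
      \<le> (\<integral>\<^sup>+\<sigma>. ennreal (cmod (\<phi>h (\<tau> - \<sigma>)) * cmod (F \<xi> \<sigma>)) \<partial>lborel)"
  proof (cases "integrable lborel (\<lambda>\<sigma>. \<phi>h (\<tau> - \<sigma>) * F \<xi> \<sigma>)")
    case True
    then show ?thesis
      using integral_norm_bound_ennreal[OF True] by (simp add: norm_mult)
  qed (simp add: not_integrable_integral_eq)
  moreover have "ennreal (cmod (time_mult \<phi>h F \<xi> \<tau>)) = ennreal (1 / (2 * pi)) * ennreal (cmod (\<integral>\<sigma>. \<phi>h (\<tau> - \<sigma>) * F \<xi> \<sigma> \<partial>lborel))"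
    unfolding time_mult_def by (simp add: norm_mult norm_divide ennreal_mult'[symmetric])
  ultimately show ?thesis
    by (simp add: mult_left_mono)
qed

lemma modulation_integral_time_mult_le:
  assumes [measurable]: "\<phi>h \<in> borel_measurable borel" "F \<xi> \<in> borel_measurable borel"
    and w: "0 \<le> w" and C: "0 \<le> C"
    and convolution: "\<And>f. f \<in> borel_measurable borel \<Longrightarrow> (\<And>\<sigma>. 0 \<le> f \<sigma>) \<Longrightarrow>
      (\<integral>\<^sup>+\<tau>. ennreal (jbr (\<tau> - a) powr (2 * b)) * (\<integral>\<^sup>+\<sigma>. ennreal (cmod (\<phi>h (\<tau> - \<sigma>)) * f \<sigma>) \<partial>lborel)\<^sup>2 \<partial>lborel)
        \<le> ennreal C * (\<integral>\<^sup>+\<sigma>. ennreal (jbr (\<sigma> - a) * (f \<sigma>)\<^sup>2) \<partial>lborel)"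
  shows "(\<integral>\<^sup>+\<tau>. ennreal (w * jbr (\<tau> - a) powr (2 * b) * (cmod (time_mult \<phi>h F \<xi> \<tau>))\<^sup>2) \<partial>lborel)
    \<le> ennreal (C / (2 * pi)\<^sup>2) * (\<integral>\<^sup>+\<tau>. ennreal (w * jbr (\<tau> - a) powr (2 * (1/2)) * (cmod (F \<xi> \<tau>))\<^sup>2) \<partial>lborel)"
proof -
  define T where "T \<tau> = (\<integral>\<^sup>+\<sigma>. ennreal (cmod (\<phi>h (\<tau> - \<sigma>)) * cmod (F \<xi> \<sigma>)) \<partial>lborel)" for \<tau>
  have "(\<integral>\<^sup>+\<tau>. ennreal (w * jbr (\<tau> - a) powr (2 * b) * (cmod (time_mult \<phi>h F \<xi> \<tau>))\<^sup>2) \<partial>lborel)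
      \<le> (\<integral>\<^sup>+\<tau>. ennreal (w / (2 * pi)\<^sup>2) * (ennreal (jbr (\<tau> - a) powr (2 * b)) * (T \<tau>)\<^sup>2) \<partial>lborel)"
  proof (intro nn_integral_mono)
    fix \<tau>
    have "(ennreal (cmod (time_mult \<phi>h F \<xi> \<tau>)))\<^sup>2 \<le> (ennreal (1 / (2 * pi)) * T \<tau>)\<^sup>2"
      unfolding T_def by (intro power_mono norm_time_mult_le) simp
    then have "ennreal (w * jbr (\<tau> - a) powr (2 * b)) * (ennreal (cmod (time_mult \<phi>h F \<xi> \<tau>)))\<^sup>2
        \<le> ennreal (w * jbr (\<tau> - a) powr (2 * b)) * (ennreal (1 / (2 * pi)) * T \<tau>)\<^sup>2"
      by (rule mult_left_mono) simp
    also have "\<dots> = (ennreal w * ennreal ((1 / (2 * pi))\<^sup>2)) * (ennreal (jbr (\<tau> - a) powr (2 * b)) * (T \<tau>)\<^sup>2)"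
      using w by (simp add: ennreal_mult power_mult_distrib ennreal_power mult_ac)
    also have "ennreal w * ennreal ((1 / (2 * pi))\<^sup>2) = ennreal (w / (2 * pi)\<^sup>2)"
      using w by (simp add: ennreal_mult[symmetric] power_divide)
    finally show "ennreal (w * jbr (\<tau> - a) powr (2 * b) * (cmod (time_mult \<phi>h F \<xi> \<tau>))\<^sup>2)
        \<le> ennreal (w / (2 * pi)\<^sup>2) * (ennreal (jbr (\<tau> - a) powr (2 * b)) * (T \<tau>)\<^sup>2)"
      using w by (simp add: ennreal_mult ennreal_power)
  qed
  also have "\<dots> = ennreal (w / (2 * pi)\<^sup>2) * (\<integral>\<^sup>+\<tau>. ennreal (jbr (\<tau> - a) powr (2 * b)) * (T \<tau>)\<^sup>2 \<partial>lborel)"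
    unfolding T_def by (rule nn_integral_cmult) measurable
  also have "\<dots> \<le> ennreal (w / (2 * pi)\<^sup>2) * (ennreal C * (\<integral>\<^sup>+\<sigma>. ennreal (jbr (\<sigma> - a) * (cmod (F \<xi> \<sigma>))\<^sup>2) \<partial>lborel))"
    unfolding T_def by (intro mult_left_mono convolution) simp_all
  also have "\<dots> = ennreal (C / (2 * pi)\<^sup>2) * (ennreal w * (\<integral>\<^sup>+\<sigma>. ennreal (jbr (\<sigma> - a) * (cmod (F \<xi> \<sigma>))\<^sup>2) \<partial>lborel))"
    using w C by (simp add: ennreal_mult'[symmetric] mult.assoc[symmetric] field_simps)
  also have "ennreal w * (\<integral>\<^sup>+\<sigma>. ennreal (jbr (\<sigma> - a) * (cmod (F \<xi> \<sigma>))\<^sup>2) \<partial>lborel)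
      = (\<integral>\<^sup>+\<tau>. ennreal (w * jbr (\<tau> - a) powr (2 * (1/2)) * (cmod (F \<xi> \<tau>))\<^sup>2) \<partial>lborel)"
    using w jbr_pos by (subst nn_integral_cmult[symmetric]) (simp_all add: ennreal_mult' less_imp_le mult.assoc)
  finally show ?thesis .
qed

lemma Xsb_sq_time_mult_le:
  assumes "\<phi>h \<in> borel_measurable borel" "\<And>\<xi>. F \<xi> \<in> borel_measurable borel" and C: "0 \<le> C"
    and convolution: "\<And>a f. f \<in> borel_measurable borel \<Longrightarrow> (\<And>\<sigma>. 0 \<le> f \<sigma>) \<Longrightarrow>
      (\<integral>\<^sup>+\<tau>. ennreal (jbr (\<tau> - a) powr (2 * b)) * (\<integral>\<^sup>+\<sigma>. ennreal (cmod (\<phi>h (\<tau> - \<sigma>)) * f \<sigma>) \<partial>lborel)\<^sup>2 \<partial>lborel)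
        \<le> ennreal C * (\<integral>\<^sup>+\<sigma>. ennreal (jbr (\<sigma> - a) * (f \<sigma>)\<^sup>2) \<partial>lborel)"
  shows "Xsb_sq s b (time_mult \<phi>h F) \<le> ennreal (C / (2 * pi)\<^sup>2) * Xsb_sq s (1/2) F"
proof -
  have "Xsb_sq s b (time_mult \<phi>h F) \<le> (\<integral>\<^sup>+\<xi>. ennreal (C / (2 * pi)\<^sup>2) * (\<integral>\<^sup>+\<tau>. ennreal ((1 / (2 * pi))
      * jbr (real_of_int \<xi>) powr (2 * s) * jbr (\<tau> - (real_of_int \<xi>)^3) powr (2 * (1/2)) * (cmod (F \<xi> \<tau>))\<^sup>2) \<partial>lborel)
      \<partial>count_space UNIV)"
    unfolding Xsb_sq_def by (intro nn_integral_mono modulation_integral_time_mult_le assms C convolution) simp_all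
  also have "\<dots> = ennreal (C / (2 * pi)\<^sup>2) * Xsb_sq s (1/2) F"
    unfolding Xsb_sq_def by (rule nn_integral_cmult) simp
  finally show ?thesis .
qed

theorem lemma2p2:
  fixes s b :: real and \<phi>h :: "real \<Rightarrow> complex"
  assumes "0 \<le> b" and "b < 1/2"
    and "\<forall>\<beta><1/2. in_Hbeta \<beta> \<phi>h"
  shows "\<exists>C::real. \<forall>F. in_Xsb s (1/2) F \<longrightarrow>
           Xsb_sq s b (time_mult \<phi>h F) \<le> ennreal (C\<^sup>2) * Xsb_sq s (1/2) F"
proof -
  define \<beta> where "\<beta> = b/2 + 1/4"
  have "b < \<beta>" and "\<beta> < 1/2"
    using assms(2) unfolding \<beta>_def by auto
  with assms have "in_Hbeta \<beta> \<phi>h" and "weighted_convolution (\<lambda>u. cmod (\<phi>h u)) b \<beta>"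
    by (auto simp: in_Hbeta_def weighted_convolution_def)
  then interpret weighted_convolution "\<lambda>u. cmod (\<phi>h u)" b \<beta>
    by simp
  have "Xsb_sq s b (time_mult \<phi>h F) \<le> ennreal ((sqrt convolution_constant / (2 * pi))\<^sup>2) * Xsb_sq s (1/2) F"
    if "in_Xsb s (1/2) F" for F
  proof -
    have "\<And>\<xi>. F \<xi> \<in> borel_measurable borel"
      using that by (simp add: in_Xsb_def)
    then have "Xsb_sq s b (time_mult \<phi>h F) \<le> ennreal (convolution_constant / (2 * pi)\<^sup>2) * Xsb_sq s (1/2) F"
      using \<open>in_Hbeta \<beta> \<phi>h\<close> unfolding in_Hbeta_def
      by (intro Xsb_sq_time_mult_le convolution_constant_nonneg weighted_convolution_estimate) simp_all
    then show ?thesis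
      by (simp add: power_divide convolution_constant_nonneg)
  qed
  then show ?thesis
    by blast
qed

end
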